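(* Let $n\ge 1$ be an integer and let $\mathbf F_{\mathcal V_n}(1)$ be the free algebra on one generator in the variety $\mathcal V_n$ generated by $\mathbf J_n$. Then $$|F_{\mathcal V_n}(1)|=\tfrac12\big(n^6+10n^5+42n^4+102n^3+157n^2+148n+72\big).$$
   Context: For $n\ge1$, $\mathbf J_n=\langle J_n;\otimes,\oplus,\wedge,\vee,\neg,\top,\mathbf f_0,\dots,\mathbf f_n,\mathbf t_0,\dots,\mathbf t_n,\bot\rangle$ where $J_n=\{\top,\mathbf f_0,\dots,\mathbf f_n,\mathbf t_0,\dots,\mathbf t_n,\bot\}$ ($2n+4$ elements). The knowledge order $\le_k$ on $J_n$ consists of the two chains $\bot<\mathbf f_n<\mathbf f_{n-1}<\dots<\mathbf f_0<\top$ and $\bot<\mathbf t_n<\dots<\mathbf t_0<\top$ (with $\mathbf f_i,\mathbf t_j$ incomparable). The truth order $\le_t$ is generated by $\mathbf f_0<\mathbf f_1<\dots<\mathbf f_n<\top<\mathbf t_n<\dots<\mathbf t_1<\mathbf t_0$ and $\mathbf f_n<\bot<\mathbf t_n$ ($\top,\bot$ incomparable). $\otimes,\oplus$ are meet and join for $\le_k$, $\wedge,\vee$ are meet and join for $\le_t$, $\neg\top=\top$, $\neg\bot=\bot$, $\neg\mathbf f_m=\mathbf t_m$, $\neg\mathbf t_m=\mathbf f_m$, and every element is a nullary operation (constant) naming itself. $\mathcal V_n$ is the variety generated by $\mathbf J_n$. *)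

theory Defs
  imports "HOL-Library.FuncSet"
begin

datatype jel = Top | Bot | Fe nat | Te nat

definition J :: "nat \<Rightarrow> jel set" where
  "J n = {Top, Bot} \<union> Fe ` {0..n} \<union> Te ` {0..n}"

text \<open>Knowledge order: two chains Bot < f_n < ... < f_0 < Top and Bot < t_n < ... < t_0 < Top.\<close>
fun le_k :: "jel \<Rightarrow> jel \<Rightarrow> bool" where
  "le_k Bot _ = True"
| "le_k _ Top = True"
| "le_k (Fe i) (Fe j) = (j \<le> i)"
| "le_k (Te i) (Te j) = (j \<le> i)"
| "le_k _ _ = False"

text \<open>Truth order: generated by f_0 < ... < f_n < Top < t_n < ... < t_0 and f_n < Bot < t_n.\<close>
fun le_t :: "jel \<Rightarrow> jel \<Rightarrow> bool" where
  "le_t (Fe i) (Fe j) = (i \<le> j)"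
| "le_t (Fe i) _ = True"
| "le_t Top Top = True"
| "le_t Top (Te j) = True"
| "le_t Top _ = False"
| "le_t Bot Bot = True"
| "le_t Bot (Te j) = True"
| "le_t Bot _ = False"
| "le_t (Te i) (Te j) = (j \<le> i)"
| "le_t (Te i) _ = False"

definition meet_in :: "'a set \<Rightarrow> ('a \<Rightarrow> 'a \<Rightarrow> bool) \<Rightarrow> 'a \<Rightarrow> 'a \<Rightarrow> 'a" where
  "meet_in A le x y = (THE z. z \<in> A \<and> le z x \<and> le z y \<and> (\<forall>w\<in>A. le w x \<and> le w y \<longrightarrow> le w z))"

definition join_in :: "'a set \<Rightarrow> ('a \<Rightarrow> 'a \<Rightarrow> bool) \<Rightarrow> 'a \<Rightarrow> 'a \<Rightarrow> 'a" where
  "join_in A le x y = (THE z. z \<in> A \<and> le x z \<and> le y z \<and> (\<forall>w\<in>A. le x w \<and> le y w \<longrightarrow> le z w))"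

definition kmeet :: "nat \<Rightarrow> jel \<Rightarrow> jel \<Rightarrow> jel" where "kmeet n = meet_in (J n) le_k"
definition kjoin :: "nat \<Rightarrow> jel \<Rightarrow> jel \<Rightarrow> jel" where "kjoin n = join_in (J n) le_k"
definition tmeet :: "nat \<Rightarrow> jel \<Rightarrow> jel \<Rightarrow> jel" where "tmeet n = meet_in (J n) le_t"
definition tjoin :: "nat \<Rightarrow> jel \<Rightarrow> jel \<Rightarrow> jel" where "tjoin n = join_in (J n) le_t"

fun jneg :: "jel \<Rightarrow> jel" where
  "jneg Top = Top"
| "jneg Bot = Bot"
| "jneg (Fe m) = Te m"
| "jneg (Te m) = Fe m"

inductive_set term1 :: "nat \<Rightarrow> (jel \<Rightarrow> jel) set" for n where
  var: "(\<lambda>x. x) \<in> term1 n"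
| const: "c \<in> J n \<Longrightarrow> (\<lambda>x. c) \<in> term1 n"
| kmeet: "f \<in> term1 n \<Longrightarrow> g \<in> term1 n \<Longrightarrow> (\<lambda>x. kmeet n (f x) (g x)) \<in> term1 n"
| kjoin: "f \<in> term1 n \<Longrightarrow> g \<in> term1 n \<Longrightarrow> (\<lambda>x. kjoin n (f x) (g x)) \<in> term1 n"
| tmeet: "f \<in> term1 n \<Longrightarrow> g \<in> term1 n \<Longrightarrow> (\<lambda>x. tmeet n (f x) (g x)) \<in> term1 n"
| tjoin: "f \<in> term1 n \<Longrightarrow> g \<in> term1 n \<Longrightarrow> (\<lambda>x. tjoin n (f x) (g x)) \<in> term1 n"
| neg: "f \<in> term1 n \<Longrightarrow> (\<lambda>x. jneg (f x)) \<in> term1 n"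

text \<open>Universe of the free algebra F_{V_n}(1), realised (as usual) as the algebra of
  unary term functions of J_n, i.e. term functions restricted to the carrier J n.\<close>
definition free1 :: "nat \<Rightarrow> (jel \<Rightarrow> jel) set" where
  "free1 n = (\<lambda>f. restrict f (J n)) ` term1 n"

end

theory Submission
  imports Defs
begin

(*
  J_n has the majority term m(p, q, r) = (p \<and> q) \<or> (q \<and> r) \<or> (p \<and> r), so by the Baker-Pixley
  theorem a unary operation f on J_n is a term function iff it preserves every subalgebra of
  J_n^2 generated by a single pair (a, b). These subalgebras are computed explicitly: depending
  on (a, b) they are the equality, the full relation, the preorder generated by (Top, Bot)
  (Top below each of the blocks {f_i} and {t_i}, both below Bot), the relation generated by
  (f_i, f_j) for i < j, or converses of these. Hence f is determined by f(Top), f(Bot) and the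
  two sequences i \<mapsto> f(f_i), i \<mapsto> f(t_i); compatibility with all pairs (f_i, f_j) forces each
  sequence to be constant or a clamp i \<mapsto> f_(max e (min s i)) (or its t-version) with
  e < s \<le> n, and the formula follows by counting the admissible choices.
*)

section \<open>The operations of J_n\<close>

lemma meet_in_eqI:
  assumes "z \<in> A" "le z x" "le z y" "\<And>w. w \<in> A \<Longrightarrow> le w x \<Longrightarrow> le w y \<Longrightarrow> le w z"
    and "\<And>u v. u \<in> A \<Longrightarrow> v \<in> A \<Longrightarrow> le u v \<Longrightarrow> le v u \<Longrightarrow> u = v"
  shows "meet_in A le x y = z"
  unfolding meet_in_def by (rule the_equality) (use assms in blast)+

lemma join_in_eqI:
  assumes "z \<in> A" "le x z" "le y z" "\<And>w. w \<in> A \<Longrightarrow> le x w \<Longrightarrow> le y w \<Longrightarrow> le z w"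
    and "\<And>u v. u \<in> A \<Longrightarrow> v \<in> A \<Longrightarrow> le u v \<Longrightarrow> le v u \<Longrightarrow> u = v"
  shows "join_in A le x y = z"
  unfolding join_in_def by (rule the_equality) (use assms in blast)+

lemma le_k_antisym: "le_k u v \<Longrightarrow> le_k v u \<Longrightarrow> u = v"
  by (cases u; cases v) auto

lemma le_t_antisym: "le_t u v \<Longrightarrow> le_t v u \<Longrightarrow> u = v"
  by (cases u; cases v) auto

lemma J_iff: "x \<in> J n \<longleftrightarrow> x = Top \<or> x = Bot \<or> (\<exists>i\<le>n. x = Fe i) \<or> (\<exists>i\<le>n. x = Te i)"
  by (auto simp: J_def)

lemma J_simps [simp]: "Top \<in> J n" "Bot \<in> J n" "Fe i \<in> J n \<longleftrightarrow> i \<le> n" "Te i \<in> J n \<longleftrightarrow> i \<le> n"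
  by (auto simp: J_def)

lemma finite_J [simp]: "finite (J n)"
  by (simp add: J_def)

lemma ball_J: "(\<forall>x\<in>J n. P x) \<longleftrightarrow> P Top \<and> P Bot \<and> (\<forall>i\<le>n. P (Fe i)) \<and> (\<forall>i\<le>n. P (Te i))"
  by (auto simp: J_iff)

lemma sum_J: "sum g (J n) = g Top + g Bot + (\<Sum>i\<le>n. g (Fe i)) + (\<Sum>i\<le>n. g (Te i))"
proof -
  have J_split: "J n = {Top, Bot} \<union> Fe ` {..n} \<union> Te ` {..n}"
    by (auto simp: J_iff)
  have "sum g (J n) = sum g ({Top, Bot} \<union> Fe ` {..n}) + sum g (Te ` {..n})"
    unfolding J_split by (rule sum.union_disjoint) auto
  also have "sum g ({Top, Bot} \<union> Fe ` {..n}) = sum g {Top, Bot} + sum g (Fe ` {..n})"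
    by (rule sum.union_disjoint) auto
  also have "sum g (Fe ` {..n}) = (\<Sum>i\<le>n. g (Fe i))"
    by (subst sum.reindex) (auto simp: inj_on_def)
  also have "sum g (Te ` {..n}) = (\<Sum>i\<le>n. g (Te i))"
    by (subst sum.reindex) (auto simp: inj_on_def)
  finally show ?thesis by simp
qed

fun kinf :: "jel \<Rightarrow> jel \<Rightarrow> jel" where
  "kinf Top y = y"
| "kinf x Top = x"
| "kinf Bot y = Bot"
| "kinf x Bot = Bot"
| "kinf (Fe i) (Fe j) = Fe (max i j)"
| "kinf (Te i) (Te j) = Te (max i j)"
| "kinf _ _ = Bot"

fun ksup :: "jel \<Rightarrow> jel \<Rightarrow> jel" where
  "ksup Bot y = y"
| "ksup x Bot = x"
| "ksup Top y = Top"
| "ksup x Top = Top"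
| "ksup (Fe i) (Fe j) = Fe (min i j)"
| "ksup (Te i) (Te j) = Te (min i j)"
| "ksup _ _ = Top"

fun tinf :: "nat \<Rightarrow> jel \<Rightarrow> jel \<Rightarrow> jel" where
  "tinf n (Fe i) (Fe j) = Fe (min i j)"
| "tinf n (Fe i) y = Fe i"
| "tinf n x (Fe j) = Fe j"
| "tinf n (Te i) (Te j) = Te (max i j)"
| "tinf n (Te i) y = y"
| "tinf n x (Te j) = x"
| "tinf n Top Top = Top"
| "tinf n Bot Bot = Bot"
| "tinf n Top Bot = Fe n"
| "tinf n Bot Top = Fe n"

fun tsup :: "nat \<Rightarrow> jel \<Rightarrow> jel \<Rightarrow> jel" where
  "tsup n (Te i) (Te j) = Te (min i j)"
| "tsup n (Te i) y = Te i"
| "tsup n x (Te j) = Te j"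
| "tsup n (Fe i) (Fe j) = Fe (max i j)"
| "tsup n (Fe i) y = y"
| "tsup n x (Fe j) = x"
| "tsup n Top Top = Top"
| "tsup n Bot Bot = Bot"
| "tsup n Top Bot = Te n"
| "tsup n Bot Top = Te n"

lemma kinf_ksup_bounds [simp]: "kinf x Top = x" "kinf x Bot = Bot" "ksup x Top = Top" "ksup x Bot = x"
  by (cases x; simp)+

lemma tinf_tsup_bounds [simp]:
  "tinf n (Fe 0) x = Fe 0" "tinf n (Te 0) x = x" "tsup n (Fe 0) x = x" "tsup n x (Fe 0) = x"
  by (cases x; simp)+

lemma kinf_in_J: "x \<in> J n \<Longrightarrow> y \<in> J n \<Longrightarrow> kinf x y \<in> J n"
  by (cases x; cases y) auto

lemma ksup_in_J: "x \<in> J n \<Longrightarrow> y \<in> J n \<Longrightarrow> ksup x y \<in> J n"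
  by (cases x; cases y) auto

lemma tinf_in_J: "x \<in> J n \<Longrightarrow> y \<in> J n \<Longrightarrow> tinf n x y \<in> J n"
  by (cases x; cases y) auto

lemma tsup_in_J: "x \<in> J n \<Longrightarrow> y \<in> J n \<Longrightarrow> tsup n x y \<in> J n"
  by (cases x; cases y) auto

lemma jneg_in_J: "x \<in> J n \<Longrightarrow> jneg x \<in> J n"
  by (cases x) auto

lemma jneg_jneg [simp]: "jneg (jneg x) = x"
  by (cases x) auto

lemma kmeet_eq: "x \<in> J n \<Longrightarrow> y \<in> J n \<Longrightarrow> kmeet n x y = kinf x y"
  unfolding kmeet_def
  by (rule meet_in_eqI) (auto simp: kinf_in_J le_k_antisym J_iff; cases x; cases y; auto)+

lemma kjoin_eq: "x \<in> J n \<Longrightarrow> y \<in> J n \<Longrightarrow> kjoin n x y = ksup x y"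
  unfolding kjoin_def
  by (rule join_in_eqI) (auto simp: ksup_in_J le_k_antisym J_iff; cases x; cases y; auto)+

lemma tmeet_eq: "x \<in> J n \<Longrightarrow> y \<in> J n \<Longrightarrow> tmeet n x y = tinf n x y"
  unfolding tmeet_def
  by (rule meet_in_eqI) (auto simp: tinf_in_J le_t_antisym J_iff; cases x; cases y; auto)+

lemma tjoin_eq: "x \<in> J n \<Longrightarrow> y \<in> J n \<Longrightarrow> tjoin n x y = tsup n x y"
  unfolding tjoin_def
  by (rule join_in_eqI) (auto simp: tsup_in_J le_t_antisym J_iff; cases x; cases y; auto)+

lemmas operation_eqs = kmeet_eq kjoin_eq tmeet_eq tjoin_eq

section \<open>Unary term functions\<close>

lemma term1_in_J: "t \<in> term1 n \<Longrightarrow> x \<in> J n \<Longrightarrow> t x \<in> J n"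
  by (induction rule: term1.induct)
    (auto simp: operation_eqs kinf_in_J ksup_in_J tinf_in_J tsup_in_J jneg_in_J)

lemma term1_comp: "t \<in> term1 n \<Longrightarrow> s \<in> term1 n \<Longrightarrow> (\<lambda>x. t (s x)) \<in> term1 n"
  by (induction rule: term1.induct) (auto intro: term1.intros)

definition compatible :: "nat \<Rightarrow> (jel \<Rightarrow> jel \<Rightarrow> bool) \<Rightarrow> bool" where
  "compatible n R \<longleftrightarrow>
     (\<forall>x1 y1 x2 y2. R x1 y1 \<longrightarrow> R x2 y2 \<longrightarrow>
        R (kinf x1 x2) (kinf y1 y2) \<and> R (ksup x1 x2) (ksup y1 y2) \<and>
        R (tinf n x1 x2) (tinf n y1 y2) \<and> R (tsup n x1 x2) (tsup n y1 y2)) \<and>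
     (\<forall>x y. R x y \<longrightarrow> R (jneg x) (jneg y))"

lemma term1_preserves:
  assumes "t \<in> term1 n" "compatible n R" "\<And>c. c \<in> J n \<Longrightarrow> R c c"
    and "a \<in> J n" "b \<in> J n" "R a b"
  shows "R (t a) (t b)"
  using assms(1)
  by induction (use assms(2-6) in \<open>auto simp: operation_eqs term1_in_J compatible_def\<close>)

lemma compatible_eq: "compatible n (=)"
  by (simp add: compatible_def)

lemma compatible_top: "compatible n (\<lambda>_ _. True)"
  by (simp add: compatible_def)

lemma compatible_converse: "compatible n R \<Longrightarrow> compatible n (\<lambda>x y. R y x)"
  by (simp add: compatible_def)

fun is_fe :: "jel \<Rightarrow> bool" where
  "is_fe (Fe _) = True"
| "is_fe _ = False"

fun is_te :: "jel \<Rightarrow> bool" where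
  "is_te (Te _) = True"
| "is_te _ = False"

(*
  topbot_rel and chain_rel i j (for i < j) are the subalgebras of J_n^2 generated by (Top, Bot)
  and by (f_i, f_j); gen_rel a b, assembled from them and their converses, is the one generated
  by (a, b) (term1_gen_rel and sg_pair_gen_rel).
*)
definition topbot_rel :: "jel \<Rightarrow> jel \<Rightarrow> bool" where
  "topbot_rel x y \<longleftrightarrow> x = y \<or> x = Top \<or> y = Bot \<or> (is_fe x \<and> is_fe y) \<or> (is_te x \<and> is_te y)"

fun chain_rel :: "nat \<Rightarrow> nat \<Rightarrow> jel \<Rightarrow> jel \<Rightarrow> bool" where
  "chain_rel i j (Fe k) (Fe l) \<longleftrightarrow> k = l \<or> i \<le> k \<and> k < l \<and> l \<le> j"
| "chain_rel i j (Te k) (Te l) \<longleftrightarrow> k = l \<or> i \<le> k \<and> k < l \<and> l \<le> j"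
| "chain_rel i j x y \<longleftrightarrow> x = y"

lemma all_jel: "(\<forall>x. P x) \<longleftrightarrow> P Top \<and> P Bot \<and> (\<forall>i. P (Fe i)) \<and> (\<forall>i. P (Te i))"
  by (metis jel.exhaust)

lemma compatible_topbot_rel: "compatible n topbot_rel"
  by (simp add: compatible_def topbot_rel_def all_jel)

lemma compatible_chain_rel: "compatible n (chain_rel i j)"
  by (simp add: compatible_def all_jel) linarith

lemma chain_rel_refl: "chain_rel i j x x"
  by (cases x) auto

definition gen_rel :: "jel \<Rightarrow> jel \<Rightarrow> jel \<Rightarrow> jel \<Rightarrow> bool" where
  "gen_rel a b =
    (if a = b then (=)
     else if a = Top \<or> b = Bot then topbot_rel
     else if a = Bot \<or> b = Top then (\<lambda>x y. topbot_rel y x)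
     else case (a, b) of
       (Fe i, Fe j) \<Rightarrow> if i < j then chain_rel i j else (\<lambda>x y. chain_rel j i y x)
     | (Te i, Te j) \<Rightarrow> if i < j then chain_rel i j else (\<lambda>x y. chain_rel j i y x)
     | _ \<Rightarrow> (\<lambda>_ _. True))"

lemma compatible_gen_rel: "compatible n (gen_rel a b)"
  by (auto simp: gen_rel_def compatible_eq compatible_top compatible_topbot_rel
      compatible_chain_rel compatible_converse split: jel.split)

lemma gen_rel_refl: "gen_rel a b c c"
  by (auto simp: gen_rel_def topbot_rel_def chain_rel_refl split: jel.split)

lemma gen_rel_generator: "gen_rel a b a b"
  by (cases a; cases b) (auto simp: gen_rel_def topbot_rel_def)

lemma gen_rel_swap: "gen_rel a b x y \<longleftrightarrow> gen_rel b a y x"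
  by (cases a; cases b) (auto simp: gen_rel_def)

lemma term1_gen_rel: "t \<in> term1 n \<Longrightarrow> a \<in> J n \<Longrightarrow> b \<in> J n \<Longrightarrow> gen_rel a b (t a) (t b)"
  by (rule term1_preserves[OF _ compatible_gen_rel gen_rel_refl _ _ gen_rel_generator])

section \<open>Subalgebras of J_n^2 generated by a pair\<close>

(* Every element is a constant, so the subalgebra generated by (a, b) is {(t a, t b) | t unary term}. *)
definition sg_pair :: "nat \<Rightarrow> jel \<Rightarrow> jel \<Rightarrow> (jel \<times> jel) set" where
  "sg_pair n a b = (\<lambda>t. (t a, t b)) ` term1 n"

lemma sg_pair_generator: "(a, b) \<in> sg_pair n a b"
  unfolding sg_pair_def using term1.var by force

lemma sg_pair_const: "c \<in> J n \<Longrightarrow> (c, c) \<in> sg_pair n a b"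
  unfolding sg_pair_def using term1.const by force

lemma sg_pair_swap: "(x, y) \<in> sg_pair n a b \<Longrightarrow> (y, x) \<in> sg_pair n b a"
  unfolding sg_pair_def by force

lemma sg_pair_applyI:
  assumes "(x, y) \<in> sg_pair n a b" "s \<in> term1 n" "s x = x'" "s y = y'"
  shows "(x', y') \<in> sg_pair n a b"
proof -
  obtain t where "t \<in> term1 n" "x = t a" "y = t b"
    using assms(1) by (auto simp: sg_pair_def)
  then show ?thesis
    using assms(2-4) term1_comp[of s n t] by (force simp: sg_pair_def)
qed

lemma sg_pair_jneg: "(x, y) \<in> sg_pair n a b \<Longrightarrow> (jneg x, jneg y) \<in> sg_pair n a b"
  by (rule sg_pair_applyI[where s=jneg]) (auto intro: term1.intros)

lemma sg_pair_topbot: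
  assumes TB: "(Top, Bot) \<in> sg_pair n a b" and "x \<in> J n" "y \<in> J n" "topbot_rel x y"
  shows "(x, y) \<in> sg_pair n a b"
proof -
  have FF: "(Fe k, Fe l) \<in> sg_pair n a b" if "k \<le> n" "l \<le> n" for k l
  proof (cases "k \<le> l")
    case True
    show ?thesis
      by (rule sg_pair_applyI[OF TB, where s="\<lambda>z. kjoin n (kmeet n (Fe k) z) (Fe l)"])
        (use that True in \<open>auto intro!: term1.intros simp: operation_eqs\<close>)
  next
    case False
    show ?thesis
      by (rule sg_pair_applyI[OF TB, where s="\<lambda>z. tmeet n (kjoin n (Fe l) z) (Fe k)"])
        (use that False in \<open>auto intro!: term1.intros simp: operation_eqs\<close>)
  qed
  consider "x = y" | "x = Top" | "y = Bot" | k l where "x = Fe k" "y = Fe l"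
    | k l where "x = Te k" "y = Te l"
    using \<open>topbot_rel x y\<close> by (cases x; cases y) (auto simp: topbot_rel_def)
  then show ?thesis
  proof cases
    case 1
    then show ?thesis using \<open>y \<in> J n\<close> by (simp add: sg_pair_const)
  next
    case 2
    show ?thesis
      by (rule sg_pair_applyI[OF TB, where s="\<lambda>z. kjoin n y z"])
        (use 2 \<open>y \<in> J n\<close> in \<open>auto intro!: term1.intros simp: operation_eqs\<close>)
  next
    case 3
    show ?thesis
      by (rule sg_pair_applyI[OF TB, where s="\<lambda>z. kmeet n x z"])
        (use 3 \<open>x \<in> J n\<close> in \<open>auto intro!: term1.intros simp: operation_eqs\<close>)
  next
    case (4 k l)
    then show ?thesis using FF assms(2,3) by simp
  next
    case (5 k l)
    then show ?thesis using sg_pair_jneg[OF FF[of k l]] assms(2,3) by simp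
  qed
qed

lemma sg_pair_chain:
  assumes ij: "(Fe i, Fe j) \<in> sg_pair n a b" "j \<le> n"
    and "x \<in> J n" "y \<in> J n" "chain_rel i j x y"
  shows "(x, y) \<in> sg_pair n a b"
proof -
  have FF: "(Fe k, Fe l) \<in> sg_pair n a b" if "i \<le> k" "k < l" "l \<le> j" for k l
    by (rule sg_pair_applyI[OF ij(1), where s="\<lambda>z. tmeet n (tjoin n z (Fe k)) (Fe l)"])
      (use that ij(2) in \<open>auto intro!: term1.intros simp: operation_eqs\<close>)
  consider "x = y" | k l where "i \<le> k" "k < l" "l \<le> j" "x = Fe k" "y = Fe l"
    | k l where "i \<le> k" "k < l" "l \<le> j" "x = Te k" "y = Te l"
    using \<open>chain_rel i j x y\<close> by (cases x; cases y) auto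
  then show ?thesis
  proof cases
    case 1
    then show ?thesis using \<open>y \<in> J n\<close> by (simp add: sg_pair_const)
  next
    case (2 k l)
    then show ?thesis using FF by simp
  next
    case (3 k l)
    then show ?thesis using sg_pair_jneg[OF FF[of k l]] by simp
  qed
qed

lemma sg_pair_full:
  assumes FT: "(Fe 0, Te 0) \<in> sg_pair n a b" and "x \<in> J n" "y \<in> J n"
  shows "(x, y) \<in> sg_pair n a b"
  by (rule sg_pair_applyI[OF FT, where s="\<lambda>z. tjoin n (tmeet n z y) (tmeet n (jneg z) x)"])
    (use assms(2,3) in \<open>auto intro!: term1.intros simp: operation_eqs\<close>)

definition oriented :: "jel \<Rightarrow> jel \<Rightarrow> bool" where
  "oriented a b \<longleftrightarrow> a = b \<or> a = Top \<or> b = Bot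
     \<or> (\<exists>i j. i < j \<and> (a = Fe i \<and> b = Fe j \<or> a = Te i \<and> b = Te j)) \<or> (\<exists>i j. a = Fe i \<and> b = Te j)"

lemma oriented_or_swap: "oriented a b \<or> oriented b a"
  by (cases a; cases b) (auto simp: oriented_def)

lemma sg_pair_gen_rel_oriented:
  assumes "a \<in> J n" "b \<in> J n" "x \<in> J n" "y \<in> J n" "gen_rel a b x y" "oriented a b"
  shows "(x, y) \<in> sg_pair n a b"
  using assms(6) unfolding oriented_def
proof (elim disjE exE conjE)
  assume "a = b"
  then show ?thesis using assms(4,5) by (simp add: gen_rel_def sg_pair_const)
next
  assume "a = Top"
  show ?thesis
  proof (cases "b = Top")
    case False
    have "(Top, Bot) \<in> sg_pair n a b"
      by (rule sg_pair_applyI[OF sg_pair_generator, where s="\<lambda>z. kmeet n z (jneg z)"])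
        (use \<open>a = Top\<close> False assms(2) in \<open>auto intro!: term1.intros simp: kmeet_eq J_iff\<close>)
    then show ?thesis using sg_pair_topbot assms(3-5) \<open>a = Top\<close> False by (simp add: gen_rel_def)
  qed (use \<open>a = Top\<close> assms(4,5) in \<open>simp add: gen_rel_def sg_pair_const\<close>)
next
  assume "b = Bot"
  show ?thesis
  proof (cases "a = Bot")
    case False
    have "(Top, Bot) \<in> sg_pair n a b"
      by (rule sg_pair_applyI[OF sg_pair_generator, where s="\<lambda>z. kjoin n z (jneg z)"])
        (use \<open>b = Bot\<close> False assms(1) in \<open>auto intro!: term1.intros simp: kjoin_eq J_iff\<close>)
    then show ?thesis using sg_pair_topbot assms(3-5) \<open>b = Bot\<close> False by (simp add: gen_rel_def)
  qed (use \<open>b = Bot\<close> assms(4,5) in \<open>simp add: gen_rel_def sg_pair_const\<close>)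
next
  fix i j
  assume ij: "i < j" "a = Fe i" "b = Fe j"
  then show ?thesis
    using sg_pair_chain[OF sg_pair_generator] assms(2-5) by (simp add: gen_rel_def)
next
  fix i j
  assume ij: "i < j" "a = Te i" "b = Te j"
  then have "(Fe i, Fe j) \<in> sg_pair n a b"
    using sg_pair_jneg[OF sg_pair_generator[of a b n]] by simp
  then show ?thesis
    using sg_pair_chain assms(2-5) ij by (simp add: gen_rel_def)
next
  fix i j
  assume "a = Fe i" "b = Te j"
  have "(Fe 0, Te 0) \<in> sg_pair n a b"
    by (rule sg_pair_applyI[OF sg_pair_generator,
          where s="\<lambda>z. kmeet n (kjoin n z (Fe 0)) (kjoin n z (Te 0))"])
      (use \<open>a = Fe i\<close> \<open>b = Te j\<close> assms(1,2) in \<open>auto intro!: term1.intros simp: operation_eqs\<close>)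
  then show ?thesis using sg_pair_full assms(3,4) by blast
qed

lemma sg_pair_gen_rel:
  assumes "a \<in> J n" "b \<in> J n" "x \<in> J n" "y \<in> J n" "gen_rel a b x y"
  shows "(x, y) \<in> sg_pair n a b"
  using oriented_or_swap[of a b]
proof
  assume "oriented b a"
  then have "(y, x) \<in> sg_pair n b a"
    using sg_pair_gen_rel_oriented assms gen_rel_swap by blast
  then show ?thesis by (rule sg_pair_swap)
qed (use sg_pair_gen_rel_oriented assms in blast)

section \<open>The Baker--Pixley argument\<close>

definition majority :: "nat \<Rightarrow> jel \<Rightarrow> jel \<Rightarrow> jel \<Rightarrow> jel" where
  "majority n p q r = tjoin n (tjoin n (tmeet n p q) (tmeet n q r)) (tmeet n p r)"

lemma majority_term1:
  "t1 \<in> term1 n \<Longrightarrow> t2 \<in> term1 n \<Longrightarrow> t3 \<in> term1 n \<Longrightarrow>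
    (\<lambda>x. majority n (t1 x) (t2 x) (t3 x)) \<in> term1 n"
  unfolding majority_def by (intro term1.intros)

lemma majority_absorb:
  assumes "p \<in> J n" "q \<in> J n"
  shows "majority n p p q = p" "majority n p q p = p" "majority n q p p = p"
  using assms by (cases p; cases q; simp add: majority_def operation_eqs tinf_in_J tsup_in_J)+

lemma majority_interpolation:
  assumes f: "f \<in> J n \<rightarrow> J n" and "S \<subseteq> J n" and x: "x1 \<noteq> x2" "x1 \<noteq> x3" "x2 \<noteq> x3"
    and t: "t1 \<in> term1 n" "t2 \<in> term1 n" "t3 \<in> term1 n"
    and agree: "\<forall>x\<in>S - {x1}. t1 x = f x" "\<forall>x\<in>S - {x2}. t2 x = f x" "\<forall>x\<in>S - {x3}. t3 x = f x"
  shows "\<exists>t\<in>term1 n. \<forall>x\<in>S. t x = f x"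
proof (rule bexI[OF _ majority_term1[OF t]], intro ballI)
  fix x assume "x \<in> S"
  then have "x \<in> J n" using \<open>S \<subseteq> J n\<close> by blast
  then have J: "f x \<in> J n" "t1 x \<in> J n" "t2 x \<in> J n" "t3 x \<in> J n"
    using f t term1_in_J by auto
  \<comment> \<open>x differs from two of x1, x2, x3, so two of the three arguments equal f x\<close>
  show "majority n (t1 x) (t2 x) (t3 x) = f x"
    using \<open>x \<in> S\<close> x agree majority_absorb[OF J(1)] J by (cases "x = x1"; cases "x = x2") auto
qed

lemma subset_doubleton_if_no_three_distinct:
  assumes "S \<subseteq> A" "c \<in> A" "\<not> (\<exists>x1\<in>S. \<exists>x2\<in>S. \<exists>x3\<in>S. x1 \<noteq> x2 \<and> x1 \<noteq> x3 \<and> x2 \<noteq> x3)"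
  shows "\<exists>a\<in>A. \<exists>b\<in>A. S \<subseteq> {a, b}"
proof (cases "\<exists>a\<in>S. \<exists>b\<in>S. a \<noteq> b")
  case True
  then obtain a b where "a \<in> S" "b \<in> S" "a \<noteq> b" by blast
  then show ?thesis using assms by blast
qed (use assms in blast)

lemma term1_interpolation:
  assumes f: "f \<in> J n \<rightarrow> J n"
    and pairs: "\<And>a b. a \<in> J n \<Longrightarrow> b \<in> J n \<Longrightarrow> (f a, f b) \<in> sg_pair n a b"
    and "S \<subseteq> J n"
  shows "\<exists>t\<in>term1 n. \<forall>x\<in>S. t x = f x"
proof -
  have "finite S" using \<open>S \<subseteq> J n\<close> by (rule finite_subset) simp
  then show ?thesis using \<open>S \<subseteq> J n\<close>
  proof (induction rule: finite_psubset_induct)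
    case (psubset S)
    show ?case
    proof (cases "\<exists>x1\<in>S. \<exists>x2\<in>S. \<exists>x3\<in>S. x1 \<noteq> x2 \<and> x1 \<noteq> x3 \<and> x2 \<noteq> x3")
      case True
      then obtain x1 x2 x3 where x: "x1 \<in> S" "x2 \<in> S" "x3 \<in> S" "x1 \<noteq> x2" "x1 \<noteq> x3" "x2 \<noteq> x3"
        by blast
      have IH: "\<exists>t\<in>term1 n. \<forall>x\<in>S - {y}. t x = f x" if "y \<in> S" for y
        using that psubset.prems by (intro psubset.IH) auto
      obtain t1 where "t1 \<in> term1 n" "\<forall>x\<in>S - {x1}. t1 x = f x" using IH[OF x(1)] ..
      moreover obtain t2 where "t2 \<in> term1 n" "\<forall>x\<in>S - {x2}. t2 x = f x" using IH[OF x(2)] ..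
      moreover obtain t3 where "t3 \<in> term1 n" "\<forall>x\<in>S - {x3}. t3 x = f x" using IH[OF x(3)] ..
      ultimately show ?thesis
        using majority_interpolation[OF f psubset.prems x(4-6)] by blast
    next
      case False
      then obtain a b where "a \<in> J n" "b \<in> J n" "S \<subseteq> {a, b}"
        using subset_doubleton_if_no_three_distinct[OF psubset.prems J_simps(1)] by blast
      moreover obtain t where "t \<in> term1 n" "t a = f a" "t b = f b"
        using pairs[OF \<open>a \<in> J n\<close> \<open>b \<in> J n\<close>] by (auto simp: sg_pair_def)
      ultimately show ?thesis by blast
    qed
  qed
qed

definition gen_rel_maps :: "nat \<Rightarrow> (jel \<Rightarrow> jel) set" where
  "gen_rel_maps n = {f \<in> J n \<rightarrow>\<^sub>E J n. \<forall>a\<in>J n. \<forall>b\<in>J n. gen_rel a b (f a) (f b)}"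

lemma free1_eq_gen_rel_maps: "free1 n = gen_rel_maps n"
proof
  show "free1 n \<subseteq> gen_rel_maps n"
  proof
    fix f assume "f \<in> free1 n"
    then obtain t where "t \<in> term1 n" "f = restrict t (J n)"
      by (auto simp: free1_def)
    then show "f \<in> gen_rel_maps n"
      by (simp add: gen_rel_maps_def term1_in_J term1_gen_rel)
  qed
next
  show "gen_rel_maps n \<subseteq> free1 n"
  proof
    fix f assume f: "f \<in> gen_rel_maps n"
    then have "f \<in> J n \<rightarrow> J n" by (auto simp: gen_rel_maps_def)
    moreover have "(f a, f b) \<in> sg_pair n a b" if "a \<in> J n" "b \<in> J n" for a b
      using f that by (intro sg_pair_gen_rel) (auto simp: gen_rel_maps_def)
    ultimately obtain t where t: "t \<in> term1 n" "\<And>x. x \<in> J n \<Longrightarrow> t x = f x"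
      using term1_interpolation[of f n "J n"] by blast
    have "f \<in> extensional (J n)"
      using f by (simp add: gen_rel_maps_def PiE_iff)
    then have "f = restrict t (J n)"
      by (rule extensionalityI) (simp_all add: t(2))
    then show "f \<in> free1 n"
      unfolding free1_def using t(1) by (rule image_eqI)
  qed
qed

section \<open>Chains\<close>

lemma clamp_shape:
  fixes g :: "nat \<Rightarrow> nat"
  assumes g: "\<And>i j. i < j \<Longrightarrow> j \<le> n \<Longrightarrow> g i = g j \<or> i \<le> g i \<and> g i < g j \<and> g j \<le> j"
    and "i \<le> n"
  shows "g i = max (g 0) (min (g n) i)"
proof -
  consider "i = 0" | "i = n" "0 < n" | "0 < i" "i < n"
    using \<open>i \<le> n\<close> by linarith
  then show ?thesis
  proof cases
    case 2
    then show ?thesis using g[of 0 n] by auto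
  next
    case 3
    then show ?thesis using g[of 0 i] g[of i n] g[of 0 n] by auto
  qed simp
qed

definition const_chain :: "nat \<Rightarrow> jel \<Rightarrow> nat \<Rightarrow> jel" where
  "const_chain n c = restrict (\<lambda>_. c) {..n}"

definition clamp_chain :: "nat \<Rightarrow> (nat \<Rightarrow> jel) \<Rightarrow> nat \<times> nat \<Rightarrow> nat \<Rightarrow> jel" where
  "clamp_chain n C p = restrict (\<lambda>i. C (max (fst p) (min (snd p) i))) {..n}"

definition clamp_params :: "nat \<Rightarrow> (nat \<times> nat) set" where
  "clamp_params n = {(e, s). e < s \<and> s \<le> n}"

definition chains :: "nat \<Rightarrow> (nat \<Rightarrow> jel) set" where
  "chains n = {u \<in> {..n} \<rightarrow>\<^sub>E J n. \<forall>i j. i < j \<longrightarrow> j \<le> n \<longrightarrow> chain_rel i j (u i) (u j)}"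

lemma finite_clamp_params: "finite (clamp_params n)"
  by (rule finite_subset[of _ "{..n} \<times> {..n}"]) (auto simp: clamp_params_def)

lemma card_clamp_params: "2 * card (clamp_params n) = n * (n + 1)"
proof (induction n)
  case 0
  have "clamp_params 0 = {}" by (auto simp: clamp_params_def)
  then show ?case by simp
next
  case (Suc n)
  have split: "clamp_params (Suc n) = clamp_params n \<union> (\<lambda>e. (e, Suc n)) ` {..n}"
    by (auto simp: clamp_params_def)
  have "card (clamp_params (Suc n)) = card (clamp_params n) + card ((\<lambda>e. (e, Suc n)) ` {..n})"
    unfolding split by (rule card_Un_disjoint) (use finite_clamp_params in \<open>auto simp: clamp_params_def\<close>)
  also have "card ((\<lambda>e. (e, Suc n)) ` {..n}) = Suc n"
    by (simp add: card_image inj_on_def)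
  finally show ?case using Suc.IH by simp
qed

lemma const_chain_in_chains: "c \<in> J n \<Longrightarrow> const_chain n c \<in> chains n"
  by (auto simp: chains_def const_chain_def chain_rel_refl)

lemma clamp_chain_in_chains:
  "C = Fe \<or> C = Te \<Longrightarrow> p \<in> clamp_params n \<Longrightarrow> clamp_chain n C p \<in> chains n"
  by (cases p) (auto simp: chains_def clamp_chain_def clamp_params_def max_def min_def)

fun jel_index :: "jel \<Rightarrow> nat" where
  "jel_index (Fe k) = k"
| "jel_index (Te k) = k"
| "jel_index _ = 0"

lemma chains_cases:
  assumes u: "u \<in> chains n"
  obtains c where "c \<in> J n" "u = const_chain n c"
  | C p where "C = Fe \<or> C = Te" "p \<in> clamp_params n" "u = clamp_chain n C p"
proof -
  have uext: "u \<in> extensional {..n}" and uJ: "\<And>i. i \<le> n \<Longrightarrow> u i \<in> J n"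
    and uc: "\<And>i j. i < j \<Longrightarrow> j \<le> n \<Longrightarrow> chain_rel i j (u i) (u j)"
    using u by (auto simp: chains_def PiE_iff)
  consider (kind) C k0 where "C = Fe \<or> C = Te" "u 0 = C k0" | (top_bot) "u 0 = Top \<or> u 0 = Bot"
    by (cases "u 0") auto
  then show ?thesis
  proof cases
    case kind
    define g where "g i = jel_index (u i)" for i
    have g: "u i = C (g i)" if "i \<le> n" for i
      using uc[of 0 i] that kind by (cases "i = 0"; cases "u i") (auto simp: g_def)
    have "g i = g j \<or> i \<le> g i \<and> g i < g j \<and> g j \<le> j" if "i < j" "j \<le> n" for i j
      using uc[OF that] g[of i] g[of j] that kind(1) by auto
    then have shape: "u i = C (max (g 0) (min (g n) i))" if "i \<le> n" for i
      using g[OF that] clamp_shape[of n g i] that by simp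
    have "g n \<le> n" using uJ[of n] g[of n] kind(1) by auto
    have "g 0 \<le> g n" using shape[of n] g[of n] kind(1) by auto
    show ?thesis
    proof (cases "g 0 = g n")
      case True
      then have "u = const_chain n (C (g n))"
        using shape by (intro extensionalityI[OF uext]) (auto simp: const_chain_def)
      then show ?thesis using that(1) uJ[of n] g[of n] by simp
    next
      case False
      have "u = clamp_chain n C (g 0, g n)"
        using shape by (intro extensionalityI[OF uext]) (auto simp: clamp_chain_def)
      moreover have "(g 0, g n) \<in> clamp_params n"
        using False \<open>g 0 \<le> g n\<close> \<open>g n \<le> n\<close> by (simp add: clamp_params_def)
      ultimately show ?thesis using that(2) kind(1) by blast
    qed
  next
    case top_bot
    define c where "c = u 0"
    have "u i = c" if "i \<le> n" for i
      using uc[of 0 i] that top_bot by (cases "i = 0"; cases "u i") (auto simp: c_def)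
    then have "u = const_chain n c"
      by (intro extensionalityI[OF uext]) (auto simp: const_chain_def)
    then show ?thesis using that(1) uJ[of 0] by (simp add: c_def)
  qed
qed

lemma const_chain_endpoints: "const_chain n c 0 = c" "const_chain n c n = c"
  by (simp_all add: const_chain_def)

lemma clamp_chain_endpoints:
  assumes "p \<in> clamp_params n"
  shows "clamp_chain n C p 0 = C (fst p)" "clamp_chain n C p n = C (snd p)"
  using assms by (auto simp: clamp_chain_def clamp_params_def)

lemma inj_on_const_chain: "inj_on (const_chain n) A"
  by (rule inj_onI) (metis const_chain_endpoints(1))

lemma inj_on_clamp_chain:
  assumes "C = Fe \<or> C = Te"
  shows "inj_on (clamp_chain n C) (clamp_params n)"
proof (rule inj_onI)
  fix p q
  assume "p \<in> clamp_params n" "q \<in> clamp_params n" "clamp_chain n C p = clamp_chain n C q"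
  then have "C (fst p) = C (fst q)" "C (snd p) = C (snd q)"
    by (metis clamp_chain_endpoints(1), metis clamp_chain_endpoints(2))
  with assms show "p = q" by (auto simp: prod_eq_iff)
qed

lemma const_chain_neq_clamp_chain:
  assumes "C = Fe \<or> C = Te" "p \<in> clamp_params n"
  shows "const_chain n c \<noteq> clamp_chain n C p"
proof
  assume eq: "const_chain n c = clamp_chain n C p"
  have "C (fst p) = C (snd p)"
    using const_chain_endpoints[of n c] clamp_chain_endpoints[OF assms(2), of C] by (simp add: eq)
  with assms show False by (auto simp: clamp_params_def)
qed

lemma clamp_chain_Fe_neq_Te: "clamp_chain n Fe p \<noteq> clamp_chain n Te q"
proof
  assume "clamp_chain n Fe p = clamp_chain n Te q"
  then have "clamp_chain n Fe p 0 = clamp_chain n Te q 0" by simp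
  then show False by (simp add: clamp_chain_def)
qed

section \<open>Counting\<close>

definition tb_interval :: "nat \<Rightarrow> jel \<Rightarrow> jel \<Rightarrow> jel set" where
  "tb_interval n a b = {c \<in> J n. topbot_rel a c \<and> topbot_rel c b}"

definition tb_chains :: "nat \<Rightarrow> jel \<Rightarrow> jel \<Rightarrow> (nat \<Rightarrow> jel) set" where
  "tb_chains n a b = {u \<in> chains n. \<forall>i\<le>n. topbot_rel a (u i) \<and> topbot_rel (u i) b}"

lemma topbot_rel_kind:
  "topbot_rel x (Fe k) \<longleftrightarrow> x = Top \<or> is_fe x" "topbot_rel (Fe k) y \<longleftrightarrow> y = Bot \<or> is_fe y"
  "topbot_rel x (Te k) \<longleftrightarrow> x = Top \<or> is_te x" "topbot_rel (Te k) y \<longleftrightarrow> y = Bot \<or> is_te y"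
  by (cases x; cases y; auto simp: topbot_rel_def)+

lemma tb_chains_eq:
  "tb_chains n a b = const_chain n ` tb_interval n a b
     \<union> clamp_chain n Fe ` (if topbot_rel a (Fe 0) \<and> topbot_rel (Fe 0) b then clamp_params n else {})
     \<union> clamp_chain n Te ` (if topbot_rel a (Te 0) \<and> topbot_rel (Te 0) b then clamp_params n else {})"
    (is "_ = ?R")
proof -
  have const: "const_chain n c \<in> tb_chains n a b \<longleftrightarrow> c \<in> tb_interval n a b" if "c \<in> J n" for c
    using that const_chain_in_chains by (auto simp: tb_chains_def tb_interval_def const_chain_def)
  have clamp: "clamp_chain n C p \<in> tb_chains n a b \<longleftrightarrow> topbot_rel a (C 0) \<and> topbot_rel (C 0) b"
    if "C = Fe \<or> C = Te" "p \<in> clamp_params n" for C p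
    using that clamp_chain_in_chains by (auto simp: tb_chains_def clamp_chain_def topbot_rel_kind)
  show ?thesis
  proof (rule set_eqI)
    fix u
    show "u \<in> tb_chains n a b \<longleftrightarrow> u \<in> ?R"
    proof
      assume u: "u \<in> tb_chains n a b"
      then have "u \<in> chains n" by (simp add: tb_chains_def)
      then show "u \<in> ?R" by (cases rule: chains_cases) (use u const clamp in auto)
    next
      assume "u \<in> ?R"
      then show "u \<in> tb_chains n a b"
        using const clamp by (auto simp: tb_interval_def split: if_splits)
    qed
  qed
qed

lemma card_tb_chains:
  "card (tb_chains n a b) = card (tb_interval n a b)
     + (if topbot_rel a (Fe 0) \<and> topbot_rel (Fe 0) b then card (clamp_params n) else 0)
     + (if topbot_rel a (Te 0) \<and> topbot_rel (Te 0) b then card (clamp_params n) else 0)"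
proof -
  let ?F = "if topbot_rel a (Fe 0) \<and> topbot_rel (Fe 0) b then clamp_params n else {}"
  let ?T = "if topbot_rel a (Te 0) \<and> topbot_rel (Te 0) b then clamp_params n else {}"
  have fin: "finite (tb_interval n a b)" "finite ?F" "finite ?T"
    by (simp_all add: tb_interval_def finite_clamp_params)
  have card_clamp: "card (clamp_chain n C ` X) = card X"
    if "C = Fe \<or> C = Te" "X \<subseteq> clamp_params n" for C X
    using inj_on_subset[OF inj_on_clamp_chain[OF that(1)] that(2)] by (rule card_image)
  have disj_const: "const_chain n ` tb_interval n a b \<inter> (clamp_chain n Fe ` ?F \<union> clamp_chain n Te ` ?T) = {}"
    using const_chain_neq_clamp_chain by (auto split: if_splits)
  have disj_clamp: "clamp_chain n Fe ` ?F \<inter> clamp_chain n Te ` ?T = {}"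
    using clamp_chain_Fe_neq_Te by blast
  have "card (tb_chains n a b) = card (const_chain n ` tb_interval n a b)
      + card (clamp_chain n Fe ` ?F \<union> clamp_chain n Te ` ?T)"
    unfolding tb_chains_eq Un_assoc by (rule card_Un_disjoint) (use fin disj_const in auto)
  also have "card (clamp_chain n Fe ` ?F \<union> clamp_chain n Te ` ?T)
      = card (clamp_chain n Fe ` ?F) + card (clamp_chain n Te ` ?T)"
    by (rule card_Un_disjoint) (use fin disj_clamp in auto)
  finally show ?thesis
    using card_clamp[of Fe ?F] card_clamp[of Te ?T]
    by (simp add: card_image inj_on_const_chain split: if_splits)
qed

lemma gen_rel_all_iff:
  "(\<forall>x\<in>J n. \<forall>y\<in>J n. gen_rel x y (f x) (f y)) \<longleftrightarrow>
     topbot_rel (f Top) (f Bot) \<and>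
     (\<forall>i\<le>n. topbot_rel (f Top) (f (Fe i)) \<and> topbot_rel (f (Fe i)) (f Bot)
        \<and> topbot_rel (f Top) (f (Te i)) \<and> topbot_rel (f (Te i)) (f Bot)) \<and>
     (\<forall>i j. i < j \<longrightarrow> j \<le> n \<longrightarrow> chain_rel i j (f (Fe i)) (f (Fe j)) \<and> chain_rel i j (f (Te i)) (f (Te j)))"
  unfolding ball_J by (auto simp: gen_rel_def)

definition decompositions :: "nat \<Rightarrow> ((jel \<times> jel) \<times> (nat \<Rightarrow> jel) \<times> (nat \<Rightarrow> jel)) set" where
  "decompositions n = {((a, b), u, v). a \<in> J n \<and> b \<in> J n \<and> topbot_rel a b
     \<and> u \<in> tb_chains n a b \<and> v \<in> tb_chains n a b}"

definition assemble :: "nat \<Rightarrow> (jel \<times> jel) \<times> (nat \<Rightarrow> jel) \<times> (nat \<Rightarrow> jel) \<Rightarrow> jel \<Rightarrow> jel" where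
  "assemble n = (\<lambda>((a, b), u, v).
     restrict (\<lambda>x. case x of Top \<Rightarrow> a | Bot \<Rightarrow> b | Fe i \<Rightarrow> u i | Te i \<Rightarrow> v i) (J n))"

definition decompose :: "nat \<Rightarrow> (jel \<Rightarrow> jel) \<Rightarrow> (jel \<times> jel) \<times> (nat \<Rightarrow> jel) \<times> (nat \<Rightarrow> jel)" where
  "decompose n f = ((f Top, f Bot), restrict (\<lambda>i. f (Fe i)) {..n}, restrict (\<lambda>i. f (Te i)) {..n})"

lemma decompositions_iff:
  "((a, b), u, v) \<in> decompositions n \<longleftrightarrow>
     a \<in> J n \<and> b \<in> J n \<and> topbot_rel a b \<and> u \<in> tb_chains n a b \<and> v \<in> tb_chains n a b"
  by (simp add: decompositions_def)

lemma bij_betw_assemble: "bij_betw (assemble n) (decompositions n) (gen_rel_maps n)"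
proof (rule bij_betw_byWitness[where f' = "decompose n"])
  show "\<forall>q\<in>decompositions n. decompose n (assemble n q) = q"
  proof
    fix q assume "q \<in> decompositions n"
    then obtain a b u v where q: "q = ((a, b), u, v)" "u \<in> chains n" "v \<in> chains n"
      by (cases q) (auto simp: decompositions_iff tb_chains_def)
    then have "u \<in> extensional {..n}" "v \<in> extensional {..n}"
      by (simp_all add: chains_def PiE_iff)
    then show "decompose n (assemble n q) = q"
      by (auto simp: q decompose_def assemble_def intro!: extensionalityI[of _ "{..n}"])
  qed
  show "\<forall>f\<in>gen_rel_maps n. assemble n (decompose n f) = f"
  proof
    fix f assume "f \<in> gen_rel_maps n"
    then have "f \<in> extensional (J n)" by (simp add: gen_rel_maps_def PiE_iff)
    then show "assemble n (decompose n f) = f"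
      unfolding assemble_def decompose_def prod.case
      by (rule extensionalityI[OF restrict_extensional]) (auto simp: J_iff)
  qed
  show "assemble n ` decompositions n \<subseteq> gen_rel_maps n"
  proof
    fix f assume "f \<in> assemble n ` decompositions n"
    then obtain a b u v where f: "f = assemble n ((a, b), u, v)" and "((a, b), u, v) \<in> decompositions n"
      by auto
    then have "a \<in> J n" "b \<in> J n" "topbot_rel a b" "u \<in> tb_chains n a b" "v \<in> tb_chains n a b"
      by (simp_all add: decompositions_iff)
    then show "f \<in> gen_rel_maps n"
      unfolding gen_rel_maps_def gen_rel_all_iff
      by (auto simp: f assemble_def ball_J tb_chains_def chains_def PiE_iff)
  qed
  show "decompose n ` gen_rel_maps n \<subseteq> decompositions n"
  proof
    fix q assume "q \<in> decompose n ` gen_rel_maps n"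
    then obtain f where q: "q = decompose n f" and f: "f \<in> J n \<rightarrow>\<^sub>E J n"
      "\<forall>x\<in>J n. \<forall>y\<in>J n. gen_rel x y (f x) (f y)"
      by (auto simp: gen_rel_maps_def)
    then show "q \<in> decompositions n"
      unfolding gen_rel_all_iff
      by (auto simp: q decompose_def decompositions_iff tb_chains_def chains_def PiE_iff)
  qed
qed

lemma finite_tb_chains: "finite (tb_chains n a b)"
proof (rule finite_subset)
  show "tb_chains n a b \<subseteq> {..n} \<rightarrow>\<^sub>E J n" by (auto simp: tb_chains_def chains_def)
  show "finite ({..n} \<rightarrow>\<^sub>E J n)" by (simp add: finite_PiE)
qed

lemma card_decompositions:
  "card (decompositions n) =
     (\<Sum>a\<in>J n. \<Sum>b\<in>J n. if topbot_rel a b then card (tb_chains n a b) ^ 2 else 0)"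
proof -
  let ?pairs = "Sigma (J n) (\<lambda>a. {b \<in> J n. topbot_rel a b})"
  have "decompositions n = Sigma ?pairs (\<lambda>p. tb_chains n (fst p) (snd p) \<times> tb_chains n (fst p) (snd p))"
    by (auto simp: decompositions_def)
  then have "card (decompositions n) = (\<Sum>p\<in>?pairs. card (tb_chains n (fst p) (snd p)) ^ 2)"
    by (simp add: card_SigmaI finite_tb_chains card_cartesian_product power2_eq_square)
  also have "\<dots> = (\<Sum>a\<in>J n. \<Sum>b\<in>{b \<in> J n. topbot_rel a b}. card (tb_chains n a b) ^ 2)"
    by (simp add: sum.Sigma split_def)
  also have "\<dots> = (\<Sum>a\<in>J n. \<Sum>b\<in>J n. if topbot_rel a b then card (tb_chains n a b) ^ 2 else 0)"
    by (simp add: sum.inter_filter)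
  finally show ?thesis .
qed

lemma card_tb_interval: "card (tb_interval n a b) = (\<Sum>c\<in>J n. if topbot_rel a c \<and> topbot_rel c b then 1 else 0)"
  unfolding tb_interval_def by (simp add: sum.inter_filter[OF finite_J, symmetric])

(*
  With K = card (clamp_params n), the number of admissible chains (for each of i \<mapsto> f(f_i) and
  i \<mapsto> f(t_i)) is |J_n| + 2K if (f Top, f Bot) = (Top, Bot); 1 for (Top, Top) and (Bot, Bot);
  n + 2 + K for the 4(n + 1) pairs with one entry in {Top, Bot} and the other an f_i or t_i;
  n + 1 + K for the 2(n + 1)^2 pairs of two f's or two t's. Other pairs violate topbot_rel.
*)
lemma card_gen_rel_maps:
  "card (gen_rel_maps n) = (2 * n + 4 + 2 * card (clamp_params n)) ^ 2 + 2
     + 4 * (n + 1) * (n + 2 + card (clamp_params n)) ^ 2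
     + 2 * (n + 1) ^ 2 * (n + 1 + card (clamp_params n)) ^ 2"
proof -
  have "card (gen_rel_maps n) = card (decompositions n)"
    using bij_betw_same_card[OF bij_betw_assemble] by simp
  then show ?thesis
    unfolding card_decompositions card_tb_chains card_tb_interval sum_J
    by (simp add: topbot_rel_def power2_eq_square algebra_simps)
qed

lemma count_eq_polynomial:
  fixes n K :: nat
  assumes K: "2 * K = n * (n + 1)"
  shows "2 * ((2 * n + 4 + 2 * K) ^ 2 + 2 + 4 * (n + 1) * (n + 2 + K) ^ 2
      + 2 * (n + 1) ^ 2 * (n + 1 + K) ^ 2) =
    n ^ 6 + 10 * n ^ 5 + 42 * n ^ 4 + 102 * n ^ 3 + 157 * n ^ 2 + 148 * n + 72"
proof -
  have "2 * ((2 * n + 4 + 2 * K) ^ 2 + 2 + 4 * (n + 1) * (n + 2 + K) ^ 2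
      + 2 * (n + 1) ^ 2 * (n + 1 + K) ^ 2)
    = 2 * (2 * n + 4 + 2 * K) ^ 2 + 4 + 2 * (n + 1) * (2 * n + 4 + 2 * K) ^ 2
      + (n + 1) ^ 2 * (2 * n + 2 + 2 * K) ^ 2"
    by (simp add: power2_eq_square algebra_simps)
  also have "\<dots> = 2 * (2 * n + 4 + n * (n + 1)) ^ 2 + 4 + 2 * (n + 1) * (2 * n + 4 + n * (n + 1)) ^ 2
      + (n + 1) ^ 2 * (2 * n + 2 + n * (n + 1)) ^ 2"
    by (simp only: K)
  also have "\<dots> = n ^ 6 + 10 * n ^ 5 + 42 * n ^ 4 + 102 * n ^ 3 + 157 * n ^ 2 + 148 * n + 72"
    by (simp add: power2_eq_square power3_eq_cube algebra_simps eval_nat_numeral)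
  finally show ?thesis .
qed

theorem theorem6p3:
  fixes n :: nat
  assumes "n \<ge> 1"
  shows "2 * card (free1 n) =
    n ^ 6 + 10 * n ^ 5 + 42 * n ^ 4 + 102 * n ^ 3 + 157 * n ^ 2 + 148 * n + 72"
  unfolding free1_eq_gen_rel_maps card_gen_rel_maps
  using count_eq_polynomial[OF card_clamp_params] .

end
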